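(* Let $\sigma_0,\sigma_\epsilon>0$ with $\sigma_0\neq\sigma_\epsilon$, $\theta_0\in\mathbb{R}$, prior $\Theta\sim\mathrm{Laplace}(\theta_0,\sigma_0)$, signal $X=\Theta+\epsilon$ with $\epsilon\sim\mathrm{Laplace}(0,\sigma_\epsilon)$ independent of $\Theta$, and let $\theta_1(x)=\mathbb{E}[\Theta\mid X=x]$. Put $x_0=x-\theta_0$ and $x^*=\frac{2/\sigma_0}{1/\sigma_\epsilon^2-1/\sigma_0^2}$. Then as $|x_0|\to\infty$: (i) if $\sigma_0>\sigma_\epsilon$, $\theta_1(x)-\bigl(x-\operatorname{sgn}(x_0)x^*\bigr)\to0$, i.e. $\theta_1-\theta_0\approx x_0-\operatorname{sgn}(x_0)x^*$; (ii) if $\sigma_0<\sigma_\epsilon$, $\theta_1(x)-\theta_0\to-\operatorname{sgn}(x_0)\frac{\sigma_0}{\sigma_\epsilon}x^*$ (a bounded shift).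
   Context: $\mathrm{Laplace}(\mu,s)$ has density $t\mapsto\frac{1}{2s}e^{-|t-\mu|/s}$. The posterior mean is $\theta_1(x)=\frac{\int\theta f_\Theta(\theta)l_\epsilon(x-\theta)d\theta}{\int f_\Theta(\theta)l_\epsilon(x-\theta)d\theta}$. *)

theory Defs
  imports "HOL-Analysis.Analysis"
begin

definition laplace_density :: "real \<Rightarrow> real \<Rightarrow> real \<Rightarrow> real" where
  "laplace_density mu s t = exp (- \<bar>t - mu\<bar> / s) / (2 * s)"

definition posterior_mean :: "real \<Rightarrow> real \<Rightarrow> real \<Rightarrow> real \<Rightarrow> real" where
  "posterior_mean theta0 sigma0 sigmae x =
     (LINT theta|lborel. theta * laplace_density theta0 sigma0 theta * laplace_density 0 sigmae (x - theta))
   / (LINT theta|lborel. laplace_density theta0 sigma0 theta * laplace_density 0 sigmae (x - theta))"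

end

theory Submission
  imports Defs "HOL-Real_Asymp.Real_Asymp"
begin

text \<open>
  With \<open>a = 1/sigma0\<close>, \<open>b = 1/sigmae\<close> and \<open>y = x - theta0\<close>, the posterior density of
  \<open>Theta - theta0\<close> is proportional to \<open>exp (- a * \<bar>u\<bar> - b * \<bar>y - u\<bar>)\<close>. For \<open>y > 0\<close> its mass and
  first moment split into elementary exponential integrals over \<open>u < 0\<close>, \<open>0 \<le> u \<le> y\<close> and
  \<open>u > y\<close>; up to the common factor \<open>exp (- b * y)\<close> both are combinations of \<open>1\<close>,
  \<open>E = exp ((b - a) * y)\<close> and \<open>y * E\<close>. If \<open>b > a\<close> the terms with \<open>E\<close> dominate and the posterior
  mean is \<open>y - xstar\<close> up to an exponentially small error; if \<open>b < a\<close> then \<open>E \<rightarrow> 0\<close> and the mean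
  converges. The reflection \<open>(y, u) \<mapsto> (- y, - u)\<close> preserves the kernel, so the shift is odd
  in \<open>y\<close> and \<open>y \<rightarrow> -\<infinity>\<close> follows from \<open>y \<rightarrow> \<infinity>\<close>.
\<close>

lemma has_bochner_integral_FTC_lessThan:
  fixes f F :: "real \<Rightarrow> real"
  assumes deriv: "\<And>x. x < b \<Longrightarrow> DERIV F x :> f x"
    and cont: "\<And>x. x < b \<Longrightarrow> isCont f x"
    and nonneg: "\<And>x. x < b \<Longrightarrow> 0 \<le> f x"
    and lim_bot: "(F \<longlongrightarrow> A) at_bot" and lim_b: "(F \<longlongrightarrow> B) (at_left b)"
  shows "has_bochner_integral lborel (\<lambda>x. indicator {..<b} x * f x) (B - A)"
proof -
  have "((F \<circ> real_of_ereal) \<longlongrightarrow> A) (at_right (-\<infinity>))"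
    using lim_bot by (simp add: ereal_tendsto_simps)
  moreover have "((F \<circ> real_of_ereal) \<longlongrightarrow> B) (at_left (ereal b))"
    using lim_b by (simp add: ereal_tendsto_simps)
  ultimately have "set_integrable lborel (einterval (-\<infinity>) (ereal b)) f"
    "(LBINT x=-\<infinity>..ereal b. f x) = B - A"
    by (intro interval_integral_FTC_nonneg[where F = F]; simp add: deriv cont nonneg)+
  then show ?thesis
    by (simp add: has_bochner_integral_iff set_integrable_def
        interval_lebesgue_integral_def set_lebesgue_integral_def)
qed

lemma has_bochner_integral_FTC_atLeastAtMost:
  fixes f F :: "real \<Rightarrow> real"
  assumes "a \<le> b" and deriv: "\<And>x. DERIV F x :> f x" and cont: "continuous_on {a..b} f"
  shows "has_bochner_integral lborel (\<lambda>x. indicator {a..b} x * f x) (F b - F a)"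
proof -
  have "integral\<^sup>L lborel (\<lambda>x. indicator {a..b} x *\<^sub>R f x) = F b - F a"
    using \<open>a \<le> b\<close> cont
    by (intro integral_FTC_atLeastAtMost has_field_derivative_imp_has_derivative)
      (auto simp: has_real_derivative_iff_has_vector_derivative[symmetric]
        intro: DERIV_subset[OF deriv])
  then show ?thesis
    using borel_integrable_atLeastAtMost'[OF cont]
    by (simp add: has_bochner_integral_iff set_integrable_def)
qed

lemma has_bochner_integral_exp_lessThan_0:
  fixes k :: real assumes "k > 0"
  shows "has_bochner_integral lborel (\<lambda>u. indicator {..<0} u * exp (k * u)) (1 / k)"
proof -
  have "has_bochner_integral lborel (\<lambda>u. indicator {..<0} u * exp (k * u)) (1 / k - 0)"
  proof (rule has_bochner_integral_FTC_lessThan[where F = "\<lambda>u. exp (k * u) / k"])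
    show "((\<lambda>u. exp (k * u) / k) \<longlongrightarrow> 0) at_bot" using assms by real_asymp
    show "((\<lambda>u. exp (k * u) / k) \<longlongrightarrow> 1 / k) (at_left 0)"
      using assms by (auto intro!: tendsto_eq_intros)
  qed (use assms in \<open>auto intro!: derivative_eq_intros continuous_intros\<close>)
  then show ?thesis by simp
qed

lemma has_bochner_integral_mult_exp_lessThan_0:
  fixes k :: real assumes "k > 0"
  shows "has_bochner_integral lborel (\<lambda>u. indicator {..<0} u * (u * exp (k * u))) (- 1 / k\<^sup>2)"
proof -
  let ?F = "\<lambda>u. (1 / k\<^sup>2 - u / k) * exp (k * u)"
  have "has_bochner_integral lborel (\<lambda>u. indicator {..<0} u * - (u * exp (k * u))) (1 / k\<^sup>2 - 0)"
  proof (rule has_bochner_integral_FTC_lessThan[where F = ?F])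
    show "(?F \<longlongrightarrow> 0) at_bot" using assms by real_asymp
    show "(?F \<longlongrightarrow> 1 / k\<^sup>2) (at_left 0)" using assms by (auto intro!: tendsto_eq_intros)
    show "DERIV ?F x :> - (x * exp (k * x))" for x
      using assms by (auto intro!: derivative_eq_intros simp: field_simps power2_eq_square)
  qed (auto intro!: continuous_intros simp: mult_nonpos_nonneg)
  from has_bochner_integral_minus[OF this] show ?thesis by simp
qed

lemma has_bochner_integral_exp_greaterThan:
  fixes k y :: real assumes "k > 0"
  shows "has_bochner_integral lborel (\<lambda>u. indicator {y<..} u * exp (- k * u)) (exp (- k * y) / k)"
proof -
  have "has_bochner_integral lborel (\<lambda>t. exp (- k * y) * (indicator {..<0} t * exp (k * t)))
      (exp (- k * y) * (1 / k))"
    using has_bochner_integral_exp_lessThan_0[OF assms] by (rule has_bochner_integral_mult_right)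
  then show ?thesis
    by (subst lborel_has_bochner_integral_real_affine_iff[where c = "-1" and t = y])
      (simp_all add: indicator_def mult_exp_exp algebra_simps)
qed

lemma has_bochner_integral_mult_exp_greaterThan:
  fixes k y :: real assumes "k > 0"
  shows "has_bochner_integral lborel (\<lambda>u. indicator {y<..} u * (u * exp (- k * u)))
    ((y / k + 1 / k\<^sup>2) * exp (- k * y))"
proof -
  have "has_bochner_integral lborel
      (\<lambda>t. exp (- k * y) * (y * (indicator {..<0} t * exp (k * t)) - indicator {..<0} t * (t * exp (k * t))))
      (exp (- k * y) * (y * (1 / k) - - 1 / k\<^sup>2))"
    by (intro has_bochner_integral_mult_right has_bochner_integral_diff
        has_bochner_integral_exp_lessThan_0 has_bochner_integral_mult_exp_lessThan_0 assms)
  then show ?thesis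
    by (subst lborel_has_bochner_integral_real_affine_iff[where c = "-1" and t = y])
      (simp_all add: indicator_def mult_exp_exp algebra_simps)
qed

lemma has_bochner_integral_exp_atLeastAtMost:
  fixes c y :: real assumes "c \<noteq> 0" "y \<ge> 0"
  shows "has_bochner_integral lborel (\<lambda>u. indicator {0..y} u * exp (c * u)) ((exp (c * y) - 1) / c)"
proof -
  have "has_bochner_integral lborel (\<lambda>u. indicator {0..y} u * exp (c * u))
      (exp (c * y) / c - exp (c * 0) / c)"
    by (rule has_bochner_integral_FTC_atLeastAtMost)
      (use assms in \<open>auto intro!: derivative_eq_intros continuous_intros\<close>)
  then show ?thesis by (simp add: diff_divide_distrib)
qed

lemma has_bochner_integral_mult_exp_atLeastAtMost:
  fixes c y :: real assumes "c \<noteq> 0" "y \<ge> 0"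
  shows "has_bochner_integral lborel (\<lambda>u. indicator {0..y} u * (u * exp (c * u)))
    ((y / c - 1 / c\<^sup>2) * exp (c * y) + 1 / c\<^sup>2)"
proof -
  have "has_bochner_integral lborel (\<lambda>u. indicator {0..y} u * (u * exp (c * u)))
      ((y / c - 1 / c\<^sup>2) * exp (c * y) - (0 / c - 1 / c\<^sup>2) * exp (c * 0))"
    by (rule has_bochner_integral_FTC_atLeastAtMost)
      (use assms in \<open>auto intro!: derivative_eq_intros continuous_intros
        simp: field_simps power2_eq_square\<close>)
  then show ?thesis by simp
qed

definition laplace_kernel :: "real \<Rightarrow> real \<Rightarrow> real \<Rightarrow> real \<Rightarrow> real" where
  "laplace_kernel a b y u = exp (- a * \<bar>u\<bar> - b * \<bar>y - u\<bar>)"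

definition posterior_shift :: "real \<Rightarrow> real \<Rightarrow> real \<Rightarrow> real" where
  "posterior_shift a b y =
     (\<integral>u. u * laplace_kernel a b y u \<partial>lborel) / (\<integral>u. laplace_kernel a b y u \<partial>lborel)"

lemma laplace_density_mult_eq_kernel:
  assumes "sigma0 > 0" "sigmae > 0"
  shows "laplace_density theta0 sigma0 t * laplace_density 0 sigmae (x - t)
    = laplace_kernel (1 / sigma0) (1 / sigmae) (x - theta0) (t - theta0) / (4 * sigma0 * sigmae)"
  using assms by (simp add: laplace_density_def laplace_kernel_def mult_exp_exp field_simps)

lemma laplace_kernel_reflect: "laplace_kernel a b (- y) (- u) = laplace_kernel a b y u"
  by (simp add: laplace_kernel_def abs_minus_commute)

lemma laplace_kernel_split:
  assumes "y > 0"
  shows "laplace_kernel a b y u =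
      exp (- b * y) * (indicator {..<0} u * exp ((a + b) * u))
    + exp (- b * y) * (indicator {0..y} u * exp ((b - a) * u))
    + exp (b * y) * (indicator {y<..} u * exp (- (a + b) * u))"
  using assms by (auto simp: laplace_kernel_def indicator_def mult_exp_exp algebra_simps)

lemma has_bochner_integral_laplace_kernel:
  assumes "a > 0" "b > 0" "a \<noteq> b" "y > 0"
  shows "has_bochner_integral lborel (laplace_kernel a b y)
    (exp (- b * y) * ((1 + exp ((b - a) * y)) / (a + b) + (exp ((b - a) * y) - 1) / (b - a)))"
proof -
  let ?E = "exp ((b - a) * y)"
  have "has_bochner_integral lborel
      (\<lambda>u. exp (- b * y) * (indicator {..<0} u * exp ((a + b) * u))
        + exp (- b * y) * (indicator {0..y} u * exp ((b - a) * u))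
        + exp (b * y) * (indicator {y<..} u * exp (- (a + b) * u)))
      (exp (- b * y) * (1 / (a + b)) + exp (- b * y) * ((?E - 1) / (b - a))
        + exp (b * y) * (exp (- (a + b) * y) / (a + b)))"
    using assms
    by (intro has_bochner_integral_add has_bochner_integral_mult_right
        has_bochner_integral_exp_lessThan_0 has_bochner_integral_exp_atLeastAtMost
        has_bochner_integral_exp_greaterThan) auto
  moreover have "exp (b * y) * exp (- (a + b) * y) = exp (- b * y) * ?E"
    by (simp add: mult_exp_exp algebra_simps)
  ultimately show ?thesis
    unfolding laplace_kernel_split[OF \<open>y > 0\<close>]
    by (simp add: algebra_simps add_divide_distrib)
qed

lemma has_bochner_integral_mult_laplace_kernel:
  assumes "a > 0" "b > 0" "a \<noteq> b" "y > 0"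
  shows "has_bochner_integral lborel (\<lambda>u. u * laplace_kernel a b y u)
    (exp (- b * y) * (y * exp ((b - a) * y) * (1 / (a + b) + 1 / (b - a))
      + (1 - exp ((b - a) * y)) * (1 / (b - a)\<^sup>2 - 1 / (a + b)\<^sup>2)))"
proof -
  let ?E = "exp ((b - a) * y)"
  have "has_bochner_integral lborel
      (\<lambda>u. exp (- b * y) * (indicator {..<0} u * (u * exp ((a + b) * u)))
        + exp (- b * y) * (indicator {0..y} u * (u * exp ((b - a) * u)))
        + exp (b * y) * (indicator {y<..} u * (u * exp (- (a + b) * u))))
      (exp (- b * y) * (- 1 / (a + b)\<^sup>2)
        + exp (- b * y) * ((y / (b - a) - 1 / (b - a)\<^sup>2) * ?E + 1 / (b - a)\<^sup>2)
        + exp (b * y) * ((y / (a + b) + 1 / (a + b)\<^sup>2) * exp (- (a + b) * y)))"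
    using assms
    by (intro has_bochner_integral_add has_bochner_integral_mult_right
        has_bochner_integral_mult_exp_lessThan_0 has_bochner_integral_mult_exp_atLeastAtMost
        has_bochner_integral_mult_exp_greaterThan) auto
  moreover have "exp (b * y) * exp (- (a + b) * y) = exp (- b * y) * ?E"
    by (simp add: mult_exp_exp algebra_simps)
  ultimately show ?thesis
    unfolding laplace_kernel_split[OF \<open>y > 0\<close>] by (simp add: algebra_simps)
qed

lemma laplace_kernel_mass_factor_pos:
  fixes a b y :: real
  assumes "a > 0" "b > 0" "a \<noteq> b" "y \<ge> 0"
  shows "(1 + exp ((b - a) * y)) / (a + b) + (exp ((b - a) * y) - 1) / (b - a) > 0"
proof -
  have "(exp ((b - a) * y) - 1) / (b - a) \<ge> 0"
    using assms
    by (cases "a < b") (auto intro!: divide_nonneg_pos divide_nonpos_neg simp: mult_nonpos_nonneg)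
  moreover have "(1 + exp ((b - a) * y)) / (a + b) > 0"
    using assms by (simp add: add_pos_pos)
  ultimately show ?thesis by linarith
qed

lemma integral_laplace_kernel_reflect:
  "(\<integral>u. laplace_kernel a b (- y) u \<partial>lborel) = (\<integral>u. laplace_kernel a b y u \<partial>lborel)"
  using lborel_integral_real_affine[where c = "-1" and t = 0 and f = "laplace_kernel a b (- y)"]
  by (simp add: laplace_kernel_reflect)

lemma integral_mult_laplace_kernel_reflect:
  "(\<integral>u. u * laplace_kernel a b (- y) u \<partial>lborel) = - (\<integral>u. u * laplace_kernel a b y u \<partial>lborel)"
  using lborel_integral_real_affine[where c = "-1" and t = 0
      and f = "\<lambda>u. u * laplace_kernel a b (- y) u"]
  by (simp add: laplace_kernel_reflect)

lemma posterior_shift_reflect: "posterior_shift a b (- y) = - posterior_shift a b y"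
  by (simp add: posterior_shift_def integral_laplace_kernel_reflect integral_mult_laplace_kernel_reflect)

lemma laplace_kernel_integrable:
  assumes "a > 0" "b > 0" "a \<noteq> b" "y \<noteq> 0"
  shows "integrable lborel (laplace_kernel a b y)"
    and "integrable lborel (\<lambda>u. u * laplace_kernel a b y u)"
proof -
  have "\<bar>y\<bar> > 0" using assms by simp
  note has_integral = has_bochner_integral_laplace_kernel[OF assms(1-3) this]
    has_bochner_integral_mult_laplace_kernel[OF assms(1-3) this]
  show "integrable lborel (laplace_kernel a b y)"
    using has_integral(1)
      lborel_integrable_real_affine_iff[where c = "-1" and t = 0 and f = "laplace_kernel a b (- y)"]
    by (cases "y > 0") (auto simp: has_bochner_integral_iff laplace_kernel_reflect)
  show "integrable lborel (\<lambda>u. u * laplace_kernel a b y u)"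
    using has_integral(2)
      lborel_integrable_real_affine_iff[where c = "-1" and t = 0
        and f = "\<lambda>u. u * laplace_kernel a b (- y) u"]
    by (cases "y > 0") (auto simp: has_bochner_integral_iff laplace_kernel_reflect)
qed

lemma integral_laplace_kernel_pos:
  assumes "a > 0" "b > 0" "a \<noteq> b" "y \<noteq> 0"
  shows "(\<integral>u. laplace_kernel a b y u \<partial>lborel) > 0"
proof -
  have "\<bar>y\<bar> > 0" using assms by simp
  then have "(\<integral>u. laplace_kernel a b \<bar>y\<bar> u \<partial>lborel) > 0"
    using has_bochner_integral_integral_eq[OF has_bochner_integral_laplace_kernel[OF assms(1-3)]]
      laplace_kernel_mass_factor_pos[OF assms(1-3)]
    by simp
  then show ?thesis
    using integral_laplace_kernel_reflect[of a b y] by (cases "y > 0") auto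
qed

lemma posterior_mean_eq_posterior_shift:
  assumes "sigma0 > 0" "sigmae > 0" "sigma0 \<noteq> sigmae" "x \<noteq> theta0"
  shows "posterior_mean theta0 sigma0 sigmae x
    = theta0 + posterior_shift (1 / sigma0) (1 / sigmae) (x - theta0)"
proof -
  define k where "k = laplace_kernel (1 / sigma0) (1 / sigmae) (x - theta0)"
  define K where "K = 4 * sigma0 * sigmae"
  have dens: "laplace_density theta0 sigma0 t * laplace_density 0 sigmae (x - t) = k (t - theta0) / K"
    for t
    using laplace_density_mult_eq_kernel[OF assms(1,2)] by (simp add: k_def K_def)
  have "1 / sigma0 > 0" "1 / sigmae > 0" "1 / sigma0 \<noteq> 1 / sigmae" "x - theta0 \<noteq> 0"
    using assms by auto
  note k = laplace_kernel_integrable[OF this, folded k_def]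
    integral_laplace_kernel_pos[OF this, folded k_def]
  have num: "(\<integral>t. t * laplace_density theta0 sigma0 t * laplace_density 0 sigmae (x - t) \<partial>lborel)
      = (theta0 * (\<integral>u. k u \<partial>lborel) + (\<integral>u. u * k u \<partial>lborel)) / K"
  proof -
    have "(\<integral>t. t * laplace_density theta0 sigma0 t * laplace_density 0 sigmae (x - t) \<partial>lborel)
        = (\<integral>u. (theta0 * k u + u * k u) / K \<partial>lborel)"
      using lborel_integral_real_affine[where c = 1 and t = theta0
          and f = "\<lambda>t. t * (k (t - theta0) / K)"]
      by (simp add: dens mult.assoc algebra_simps add_divide_distrib)
    also have "\<dots> = (theta0 * (\<integral>u. k u \<partial>lborel) + (\<integral>u. u * k u \<partial>lborel)) / K"
      using k by simp
    finally show ?thesis .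
  qed
  have den: "(\<integral>t. laplace_density theta0 sigma0 t * laplace_density 0 sigmae (x - t) \<partial>lborel)
      = (\<integral>u. k u \<partial>lborel) / K"
    using lborel_integral_real_affine[where c = 1 and t = theta0 and f = "\<lambda>t. k (t - theta0) / K"]
    by (simp add: dens)
  have "K > 0" using assms by (simp add: K_def)
  then show ?thesis
    unfolding posterior_mean_def num den posterior_shift_def k_def[symmetric]
    using k by (simp add: field_simps)
qed

lemma posterior_shift_eq:
  assumes "a > 0" "b > 0" "a \<noteq> b" "y > 0"
  shows "posterior_shift a b y =
    (y * exp ((b - a) * y) * (1 / (a + b) + 1 / (b - a))
      + (1 - exp ((b - a) * y)) * (1 / (b - a)\<^sup>2 - 1 / (a + b)\<^sup>2))
    / ((1 + exp ((b - a) * y)) / (a + b) + (exp ((b - a) * y) - 1) / (b - a))"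
  using has_bochner_integral_integral_eq[OF has_bochner_integral_laplace_kernel[OF assms]]
    has_bochner_integral_integral_eq[OF has_bochner_integral_mult_laplace_kernel[OF assms]]
  by (simp add: posterior_shift_def)

lemma posterior_shift_asymptote:
  assumes "0 < a" "a < b"
  shows "((\<lambda>y. posterior_shift a b y - (y - 2 * a / (b\<^sup>2 - a\<^sup>2))) \<longlongrightarrow> 0) at_top"
proof -
  define c s where "c = b - a" and "s = a + b"
  have "c > 0" "s > 0" using assms by (simp_all add: c_def s_def)
  have xstar: "2 * a / (b\<^sup>2 - a\<^sup>2) = 1 / c - 1 / s"
  proof -
    have "b\<^sup>2 - a\<^sup>2 = c * s" "2 * a = s - c"
      by (simp_all add: c_def s_def power2_eq_square algebra_simps)
    with \<open>c > 0\<close> \<open>s > 0\<close> show ?thesis by (simp add: field_simps)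
  qed
  let ?D = "\<lambda>y. (1 / s - 1 / c) + (1 / s + 1 / c) * exp (c * y)"
  have lim: "((\<lambda>y. (1 / c - 1 / s) * (y + 2 / s) / (\<gamma> + \<delta> * exp (c * y))) \<longlongrightarrow> 0) at_top"
    if "\<delta> > 0" for \<gamma> \<delta>
    using that \<open>c > 0\<close> by real_asymp
  have "((\<lambda>y. (1 / c - 1 / s) * (y + 2 / s) / ?D y) \<longlongrightarrow> 0) at_top"
    by (rule lim) (use \<open>c > 0\<close> \<open>s > 0\<close> in \<open>simp add: add_pos_pos\<close>)
  moreover have "\<forall>\<^sub>F y in at_top. (1 / c - 1 / s) * (y + 2 / s) / ?D y
      = posterior_shift a b y - (y - 2 * a / (b\<^sup>2 - a\<^sup>2))"
    using eventually_gt_at_top[of 0]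
  proof eventually_elim
    case (elim y)
    have D: "?D y = (1 + exp (c * y)) / s + (exp (c * y) - 1) / c"
      by (simp add: algebra_simps add_divide_distrib diff_divide_distrib)
    then have "?D y \<noteq> 0"
      using laplace_kernel_mass_factor_pos[of a b y] assms elim by (simp add: c_def s_def)
    moreover have "y * exp (c * y) * (1 / s + 1 / c) + (1 - exp (c * y)) * (1 / c\<^sup>2 - 1 / s\<^sup>2)
        - (y - (1 / c - 1 / s)) * ?D y = (1 / c - 1 / s) * (y + 2 / s)"
      using \<open>c > 0\<close> \<open>s > 0\<close> by (simp add: field_simps power2_eq_square)
    ultimately show ?case
      using assms elim D
      by (simp add: posterior_shift_eq xstar divide_diff_eq_iff c_def[symmetric] s_def[symmetric])
  qed
  ultimately show ?thesis by (rule Lim_transform_eventually)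
qed

lemma posterior_shift_tendsto:
  assumes "0 < b" "b < a"
  shows "(posterior_shift a b \<longlongrightarrow> - (2 * b / (b\<^sup>2 - a\<^sup>2))) at_top"
proof -
  define c s where "c = b - a" and "s = a + b"
  have "c < 0" "s > 0" "s + c > 0" using assms by (simp_all add: c_def s_def)
  have shift: "2 * b / (b\<^sup>2 - a\<^sup>2) = 1 / c + 1 / s"
  proof -
    have "b\<^sup>2 - a\<^sup>2 = c * s" "2 * b = s + c"
      by (simp_all add: c_def s_def power2_eq_square algebra_simps)
    with \<open>c < 0\<close> \<open>s > 0\<close> show ?thesis by (simp add: field_simps)
  qed
  let ?D = "\<lambda>y. (1 + exp (c * y)) / s + (exp (c * y) - 1) / c"
  have "((\<lambda>y. (1 / c + 1 / s) * exp (c * y) * (y + 2 / s) / ?D y) \<longlongrightarrow> 0) at_top"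
    using \<open>c < 0\<close> \<open>s > 0\<close> \<open>s + c > 0\<close> by real_asymp
  moreover have "\<forall>\<^sub>F y in at_top. (1 / c + 1 / s) * exp (c * y) * (y + 2 / s) / ?D y
      = posterior_shift a b y + 2 * b / (b\<^sup>2 - a\<^sup>2)"
    using eventually_gt_at_top[of 0]
  proof eventually_elim
    case (elim y)
    have "?D y \<noteq> 0"
      using laplace_kernel_mass_factor_pos[of a b y] assms elim by (simp add: c_def s_def)
    moreover have "y * exp (c * y) * (1 / s + 1 / c) + (1 - exp (c * y)) * (1 / c\<^sup>2 - 1 / s\<^sup>2)
        + (1 / c + 1 / s) * ?D y = (1 / c + 1 / s) * exp (c * y) * (y + 2 / s)"
      using \<open>c < 0\<close> \<open>s > 0\<close> by (simp add: field_simps power2_eq_square)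
    ultimately show ?case
      using assms elim
      by (simp add: posterior_shift_eq shift divide_add_eq_iff c_def[symmetric] s_def[symmetric])
  qed
  ultimately have "((\<lambda>y. posterior_shift a b y + 2 * b / (b\<^sup>2 - a\<^sup>2)) \<longlongrightarrow> 0) at_top"
    by (rule Lim_transform_eventually)
  from tendsto_diff[OF this tendsto_const[of "2 * b / (b\<^sup>2 - a\<^sup>2)"]] show ?thesis
    by simp
qed

lemma odd_tendsto_zero_at_infinity:
  fixes f :: "real \<Rightarrow> real"
  assumes odd: "\<And>y. f (- y) = - f y" and lim: "(f \<longlongrightarrow> 0) at_top"
  shows "((\<lambda>x. f (x - t)) \<longlongrightarrow> 0) at_infinity"
proof -
  have "((\<lambda>x. f (x - t)) \<longlongrightarrow> 0) at_top"
    by (rule filterlim_compose[OF lim]) real_asymp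
  moreover have "((\<lambda>x. - f (x + t)) \<longlongrightarrow> - 0) at_top"
    by (intro tendsto_minus filterlim_compose[OF lim]) real_asymp
  then have "((\<lambda>x. f (x - t)) \<longlongrightarrow> 0) at_bot"
    unfolding filterlim_at_bot_mirror using odd[of "_ + t"] by (simp add: algebra_simps)
  ultimately show ?thesis
    unfolding at_infinity_eq_at_top_bot by (rule filterlim_sup)
qed

lemma posterior_mean_tendsto_at_infinity:
  assumes "sigma0 > 0" "sigmae > 0" "sigma0 \<noteq> sigmae"
    and lim: "((\<lambda>y. posterior_shift (1 / sigma0) (1 / sigmae) y - (\<alpha> * y + \<beta>)) \<longlongrightarrow> 0) at_top"
  shows "((\<lambda>x. posterior_mean theta0 sigma0 sigmae x - theta0
      - (\<alpha> * (x - theta0) + sgn (x - theta0) * \<beta>)) \<longlongrightarrow> 0) at_infinity"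
proof -
  define h where "h y = posterior_shift (1 / sigma0) (1 / sigmae) y - (\<alpha> * y + sgn y * \<beta>)" for y
  have "(h \<longlongrightarrow> 0) at_top"
    using lim eventually_gt_at_top[of 0]
    by (rule Lim_transform_eventually[OF _ eventually_mono]) (simp add: h_def)
  then have "((\<lambda>x. h (x - theta0)) \<longlongrightarrow> 0) at_infinity"
    by (rule odd_tendsto_zero_at_infinity[rotated]) (simp add: h_def posterior_shift_reflect)
  moreover have "\<forall>\<^sub>F x in at_infinity. x \<noteq> theta0"
    unfolding eventually_at_infinity by (rule exI[of _ "\<bar>theta0\<bar> + 1"]) auto
  ultimately show ?thesis
    by (rule Lim_transform_eventually[OF _ eventually_mono])
      (simp add: h_def posterior_mean_eq_posterior_shift assms)
qed

theorem mainTheorem13: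
  fixes sigma0 sigmae theta0 :: real
  assumes "sigma0 > 0" and "sigmae > 0" and "sigma0 \<noteq> sigmae"
  defines "xstar \<equiv> (2 / sigma0) / (1 / sigmae ^ 2 - 1 / sigma0 ^ 2)"
  shows "(sigma0 > sigmae \<longrightarrow>
           ((\<lambda>x. posterior_mean theta0 sigma0 sigmae x - (x - sgn (x - theta0) * xstar))
              \<longlongrightarrow> 0) at_infinity)
       \<and> (sigma0 < sigmae \<longrightarrow>
           ((\<lambda>x. (posterior_mean theta0 sigma0 sigmae x - theta0)
                  - (- sgn (x - theta0) * (sigma0 / sigmae) * xstar))
              \<longlongrightarrow> 0) at_infinity)"
proof -
  define a b where "a = 1 / sigma0" and "b = 1 / sigmae"
  have "a > 0" "b > 0" using assms(1,2) by (simp_all add: a_def b_def)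
  have xstar: "xstar = 2 * a / (b\<^sup>2 - a\<^sup>2)"
    by (simp add: xstar_def a_def b_def power_one_over)
  have xstar_scaled: "sigma0 / sigmae * xstar = 2 * b / (b\<^sup>2 - a\<^sup>2)"
    using assms(1,2) by (simp add: xstar a_def b_def)
  show ?thesis
  proof (intro conjI impI)
    assume "sigma0 > sigmae"
    then have "a < b" using assms(1,2) by (simp add: a_def b_def frac_less2)
    have "((\<lambda>y. posterior_shift a b y - (1 * y + - xstar)) \<longlongrightarrow> 0) at_top"
      using posterior_shift_asymptote[OF \<open>a > 0\<close> \<open>a < b\<close>] by (simp add: xstar)
    from posterior_mean_tendsto_at_infinity[OF assms(1-3) this[unfolded a_def b_def]]
    show "((\<lambda>x. posterior_mean theta0 sigma0 sigmae x - (x - sgn (x - theta0) * xstar)) \<longlongrightarrow> 0)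
        at_infinity"
      by (simp add: algebra_simps)
  next
    assume "sigma0 < sigmae"
    then have "b < a" using assms(1,2) by (simp add: a_def b_def frac_less2)
    have "((\<lambda>y. posterior_shift a b y - (0 * y + - (sigma0 / sigmae * xstar))) \<longlongrightarrow> 0) at_top"
      using tendsto_add[OF posterior_shift_tendsto[OF \<open>b > 0\<close> \<open>b < a\<close>]
          tendsto_const[of "2 * b / (b\<^sup>2 - a\<^sup>2)"]] xstar_scaled
      by simp
    from posterior_mean_tendsto_at_infinity[OF assms(1-3) this[unfolded a_def b_def]]
    show "((\<lambda>x. (posterior_mean theta0 sigma0 sigmae x - theta0)
        - (- sgn (x - theta0) * (sigma0 / sigmae) * xstar)) \<longlongrightarrow> 0) at_infinity"
      by (simp add: algebra_simps)
  qed
qed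

end
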